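(* Let $R$ be a principal ideal domain and let $a\in R$ be a nonzero non-unit. Then the left ideal $Ra$ is structurally prime if and only if $a$ is left totally unbounded or $a$ is a factor of an Inv-atom.
   Context: A principal ideal domain (PID) is a (not necessarily commutative) domain in which every left ideal and every right ideal is principal. A left ideal $\mathfrak{p}$ is structurally prime if $\mathfrak{p}\neq R$ and, for left ideals $A,B$, $AB\subseteq\mathfrak{p}$ implies $A\subseteq\mathfrak{p}$ or $B\subseteq\mathfrak{p}$. A nonzero $c$ is invariant if $Rc=cR$. An Inv-atom is an invariant non-unit $p$ such that $p=bc$ with $b,c$ invariant implies $b$ or $c$ is a unit. $a$ is a factor of $p$ if $p=ras$ for some $r,s\in R$; $a$ is a left factor of $b$ if $b\in aR$. An element $p$ is bounded if $Rp$ contains a nonzero two-sided ideal. A nonzero non-unit is left totally unbounded if it has no non-unit bounded left factors. *)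

theory Defs
  imports Main
begin

text \<open>The ring R is the whole (not necessarily commutative) type 'a, a domain
  (class ring_1_no_zero_divisors: ring with 1, 0 \<noteq> 1, no zero divisors).\<close>

definition unit_el :: "'a::ring_1 \<Rightarrow> bool" where
  "unit_el u \<longleftrightarrow> (\<exists>v. u * v = 1 \<and> v * u = 1)"

definition left_ideal :: "'a::ring_1 set \<Rightarrow> bool" where
  "left_ideal I \<longleftrightarrow> 0 \<in> I \<and> (\<forall>x\<in>I. \<forall>y\<in>I. x + y \<in> I) \<and> (\<forall>r. \<forall>x\<in>I. r * x \<in> I)"

definition right_ideal :: "'a::ring_1 set \<Rightarrow> bool" where
  "right_ideal I \<longleftrightarrow> 0 \<in> I \<and> (\<forall>x\<in>I. \<forall>y\<in>I. x + y \<in> I) \<and> (\<forall>r. \<forall>x\<in>I. x * r \<in> I)"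

definition two_sided_ideal :: "'a::ring_1 set \<Rightarrow> bool" where
  "two_sided_ideal I \<longleftrightarrow> left_ideal I \<and> right_ideal I"

definition lprinc :: "'a::ring_1 \<Rightarrow> 'a set" where
  "lprinc c = {r * c | r. True}"

definition rprinc :: "'a::ring_1 \<Rightarrow> 'a set" where
  "rprinc c = {c * r | r. True}"

inductive_set ideal_prod :: "'a::ring_1 set \<Rightarrow> 'a set \<Rightarrow> 'a set" for A B where
  zero: "0 \<in> ideal_prod A B"
| add: "\<lbrakk>a \<in> A; b \<in> B; x \<in> ideal_prod A B\<rbrakk> \<Longrightarrow> a * b + x \<in> ideal_prod A B"

definition is_PID :: "'a::ring_1_no_zero_divisors itself \<Rightarrow> bool" where
  "is_PID _ \<longleftrightarrow> (\<forall>I::'a set. left_ideal I \<longrightarrow> (\<exists>c. I = lprinc c))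
                 \<and> (\<forall>I::'a set. right_ideal I \<longrightarrow> (\<exists>c. I = rprinc c))"

definition structurally_prime :: "'a::ring_1 set \<Rightarrow> bool" where
  "structurally_prime P \<longleftrightarrow> left_ideal P \<and> P \<noteq> UNIV \<and>
     (\<forall>A B. left_ideal A \<longrightarrow> left_ideal B \<longrightarrow> ideal_prod A B \<subseteq> P \<longrightarrow> A \<subseteq> P \<or> B \<subseteq> P)"

definition invariant_el :: "'a::ring_1 \<Rightarrow> bool" where
  "invariant_el c \<longleftrightarrow> c \<noteq> 0 \<and> lprinc c = rprinc c"

definition Inv_atom :: "'a::ring_1 \<Rightarrow> bool" where
  "Inv_atom p \<longleftrightarrow> invariant_el p \<and> \<not> unit_el p \<and>
     (\<forall>b c. invariant_el b \<longrightarrow> invariant_el c \<longrightarrow> p = b * c \<longrightarrow> unit_el b \<or> unit_el c)"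

definition factor_of :: "'a::ring_1 \<Rightarrow> 'a \<Rightarrow> bool" where
  "factor_of a p \<longleftrightarrow> (\<exists>r s. p = r * a * s)"

definition left_factor_of :: "'a::ring_1 \<Rightarrow> 'a \<Rightarrow> bool" where
  "left_factor_of a b \<longleftrightarrow> b \<in> rprinc a"

definition bounded_el :: "'a::ring_1 \<Rightarrow> bool" where
  "bounded_el p \<longleftrightarrow> (\<exists>I. two_sided_ideal I \<and> I \<noteq> {0} \<and> I \<subseteq> lprinc p)"

definition left_totally_unbounded :: "'a::ring_1 \<Rightarrow> bool" where
  "left_totally_unbounded a \<longleftrightarrow> a \<noteq> 0 \<and> \<not> unit_el a \<and>
     (\<forall>b. left_factor_of b a \<longrightarrow> \<not> unit_el b \<longrightarrow> \<not> bounded_el b)"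

end

theory Submission
  imports Defs
begin

text \<open>
  The bound of Ra, the set of z with zR \<subseteq> Ra, is the largest two-sided ideal inside Ra, and in
  a PID every nonzero two-sided ideal is Rc for an invariant c. Primeness of Ra can be tested on
  elements: xRy \<subseteq> Ra must force x \<in> Ra or y \<in> Ra.

  If Ra is prime and a = be with b bounded and not a unit, then the bound I of Rb satisfies
  IRe \<subseteq> Ra while e \<notin> Ra, so I \<subseteq> Ra and a is bounded. Its bound is Rc with c invariant, and
  primeness applied to c = uv with u, v invariant shows that c is an Inv-atom; since c \<in> Ra,
  a is a factor of c.

  Conversely, let xRy \<subseteq> Ra with y \<notin> Ra. Writing Ra + Ry = Rd and a = a'd gives xR \<subseteq> Ra' with
  a' a non-unit left factor of a, so x lies in the bound of Ra'. If a is left totally unbounded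
  this bound is zero. If a is a factor of an Inv-atom p, then p lies in the bound of Ra', a proper
  two-sided ideal; but every proper two-sided ideal containing an Inv-atom p equals Rp, so the
  bound is Rp \<subseteq> Ra. Either way x \<in> Ra.
\<close>

section \<open>Units and principal left ideals in a domain\<close>

lemma mult_eq_1_commute:
  fixes x y :: "'a::ring_1_no_zero_divisors"
  assumes "x * y = 1"
  shows "y * x = 1"
proof -
  have "(y * x) * y = 1 * y" by (simp add: mult.assoc assms)
  moreover have "y \<noteq> 0" using assms by auto
  ultimately show ?thesis by (simp only: mult_cancel_right) simp
qed

lemma unit_el_iff_left_inverse:
  fixes u :: "'a::ring_1_no_zero_divisors"
  shows "unit_el u \<longleftrightarrow> (\<exists>v. v * u = 1)"
  unfolding unit_el_def using mult_eq_1_commute by blast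

lemma mem_lprinc [simp]: "x \<in> lprinc c \<longleftrightarrow> (\<exists>r. x = r * c)"
  unfolding lprinc_def by auto

lemma mem_rprinc [simp]: "x \<in> rprinc c \<longleftrightarrow> (\<exists>r. x = c * r)"
  unfolding rprinc_def by auto

lemma left_ideal_lprinc: "left_ideal (lprinc c)"
  unfolding left_ideal_def
proof (intro conjI ballI allI)
  show "0 \<in> lprinc c" by (metis mem_lprinc mult_zero_left)
next
  fix x y assume "x \<in> lprinc c" "y \<in> lprinc c"
  then show "x + y \<in> lprinc c" by (metis mem_lprinc distrib_right)
next
  fix t x assume "x \<in> lprinc c"
  then show "t * x \<in> lprinc c" by (metis mem_lprinc mult.assoc)
qed

lemma lprinc_subset_iff: "lprinc x \<subseteq> lprinc a \<longleftrightarrow> x \<in> lprinc a"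
proof
  assume "lprinc x \<subseteq> lprinc a"
  moreover have "x \<in> lprinc x" by (metis mem_lprinc mult_1_left)
  ultimately show "x \<in> lprinc a" by blast
next
  assume "x \<in> lprinc a"
  then obtain k where x: "x = k * a" by auto
  show "lprinc x \<subseteq> lprinc a"
  proof
    fix z assume "z \<in> lprinc x"
    then obtain r where "z = r * x" by auto
    then have "z = (r * k) * a" using x by (simp add: mult.assoc)
    then show "z \<in> lprinc a" using mem_lprinc by blast
  qed
qed

lemma lprinc_eq_UNIV_iff:
  fixes a :: "'a::ring_1_no_zero_divisors"
  shows "lprinc a = UNIV \<longleftrightarrow> unit_el a"
proof
  assume "lprinc a = UNIV"
  then show "unit_el a" by (metis UNIV_I mem_lprinc unit_el_iff_left_inverse)
next
  assume "unit_el a"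
  then obtain v where "v * a = 1" by (auto simp: unit_el_iff_left_inverse)
  then have "z = (z * v) * a" for z by (simp add: mult.assoc)
  then show "lprinc a = UNIV" by (metis UNIV_eq_I mem_lprinc)
qed

lemma lprinc_mult_right_mem_unit:
  fixes u v :: "'a::ring_1_no_zero_divisors"
  assumes "v \<in> lprinc (u * v)" and "v \<noteq> 0"
  shows "unit_el u"
proof -
  obtain t where "v = (t * u) * v" using assms(1) by (auto simp: mult.assoc)
  then have "t * u = 1" using assms(2) by simp
  then show ?thesis by (auto simp: unit_el_iff_left_inverse)
qed

section \<open>The bound of a principal left ideal\<close>

definition bound_ideal :: "'a::ring_1 \<Rightarrow> 'a set" where
  "bound_ideal a = {z. \<forall>r. z * r \<in> lprinc a}"

lemma two_sided_ideal_bound_ideal: "two_sided_ideal (bound_ideal a)"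
proof -
  have L: "left_ideal (lprinc a)" by (rule left_ideal_lprinc)
  have "0 \<in> bound_ideal a"
    using L by (simp add: bound_ideal_def left_ideal_def del: mem_lprinc)
  moreover have "x + y \<in> bound_ideal a" if "x \<in> bound_ideal a" "y \<in> bound_ideal a" for x y
    using that L by (simp add: bound_ideal_def left_ideal_def distrib_right del: mem_lprinc)
  moreover have "t * x \<in> bound_ideal a" "x * t \<in> bound_ideal a" if "x \<in> bound_ideal a" for x t
    using that L by (simp_all add: bound_ideal_def left_ideal_def mult.assoc del: mem_lprinc)
  ultimately show ?thesis unfolding two_sided_ideal_def left_ideal_def right_ideal_def by blast
qed

lemma bound_ideal_subset: "bound_ideal a \<subseteq> lprinc a"
  unfolding bound_ideal_def by (metis (mono_tags) mem_Collect_eq mult_1_right subsetI)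

lemma right_ideal_subset_bound_ideal:
  assumes "right_ideal I" and "I \<subseteq> lprinc a"
  shows "I \<subseteq> bound_ideal a"
  using assms unfolding right_ideal_def bound_ideal_def by blast

lemma bounded_el_iff_bound_ideal: "bounded_el a \<longleftrightarrow> (\<exists>z \<in> bound_ideal a. z \<noteq> 0)"
proof
  assume "bounded_el a"
  then obtain I where I: "two_sided_ideal I" "I \<noteq> {0}" "I \<subseteq> lprinc a"
    unfolding bounded_el_def by blast
  then have "I \<subseteq> bound_ideal a"
    by (simp add: right_ideal_subset_bound_ideal two_sided_ideal_def)
  moreover have "0 \<in> I" using I(1) by (simp add: two_sided_ideal_def left_ideal_def)
  ultimately show "\<exists>z \<in> bound_ideal a. z \<noteq> 0" using I(2) by blast
next
  assume "\<exists>z \<in> bound_ideal a. z \<noteq> 0"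
  then show "bounded_el a" unfolding bounded_el_def
    using two_sided_ideal_bound_ideal bound_ideal_subset by blast
qed

section \<open>Invariant elements\<close>

lemma two_sided_ideal_lprinc_invariant:
  assumes "invariant_el u"
  shows "two_sided_ideal (lprinc u)"
proof -
  have "r * u * s \<in> lprinc u" for r s
  proof -
    obtain s' where "u * s = s' * u" using assms by (force simp: invariant_el_def)
    then show ?thesis by (metis mem_lprinc mult.assoc)
  qed
  then show ?thesis
    unfolding two_sided_ideal_def right_ideal_def using left_ideal_lprinc[of u]
    by (auto simp: left_ideal_def)
qed

lemma invariant_el_mem_bound_ideal:
  assumes "invariant_el w" and "w \<in> lprinc a"
  shows "w \<in> bound_ideal a"
proof -
  have "lprinc w \<subseteq> bound_ideal a"
    using assms two_sided_ideal_lprinc_invariant lprinc_subset_iff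
    by (metis right_ideal_subset_bound_ideal two_sided_ideal_def)
  then show ?thesis by (metis mem_lprinc mult_1_left subsetD)
qed

lemma invariant_el_mult_mem_lprinc:
  fixes p :: "'a::ring_1_no_zero_divisors"
  assumes "invariant_el p" and "p = u * v"
  shows "p \<in> lprinc u"
proof -
  obtain t where "p * v = t * p" using assms(1) by (force simp: invariant_el_def)
  then have "p * v = (t * u) * v" using assms(2) by (simp add: mult.assoc)
  moreover have "v \<noteq> 0" using assms by (auto simp: invariant_el_def)
  ultimately show ?thesis by auto
qed

lemma invariant_el_mult_mem_rprinc:
  fixes p :: "'a::ring_1_no_zero_divisors"
  assumes "invariant_el p" and "p = u * v"
  shows "p \<in> rprinc v"
proof -
  obtain t where "u * p = p * t" using assms(1) by (force simp: invariant_el_def)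
  then have "u * p = u * (v * t)" using assms(2) by (simp add: mult.assoc)
  moreover have "u \<noteq> 0" using assms by (auto simp: invariant_el_def)
  ultimately show ?thesis by auto
qed

lemma invariant_el_factor_mem_lprinc:
  fixes p :: "'a::ring_1_no_zero_divisors"
  assumes "invariant_el p" and "factor_of a p"
  shows "p \<in> lprinc a"
proof -
  obtain r s where "p = r * (a * s)" using assms(2) by (auto simp: factor_of_def mult.assoc)
  then obtain t where "p = a * (s * t)"
    using invariant_el_mult_mem_rprinc[OF assms(1)] by (fastforce simp: mult.assoc)
  then show ?thesis using invariant_el_mult_mem_lprinc[OF assms(1)] by blast
qed

lemma invariant_el_left_quotient:
  fixes p u c :: "'a::ring_1_no_zero_divisors"
  assumes p: "invariant_el p" and c: "invariant_el c" and puc: "p = u * c"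
  shows "invariant_el u"
proof -
  have c0: "c \<noteq> 0" and u0: "u \<noteq> 0" using p c puc by (auto simp: invariant_el_def)
  have "z * u \<in> rprinc u" for z
  proof -
    obtain w where "z * p = p * w" using p by (force simp: invariant_el_def)
    moreover obtain w' where "c * w = w' * c" using c by (force simp: invariant_el_def)
    ultimately have "(z * u) * c = (u * w') * c" using puc by (simp add: mult.assoc)
    then show ?thesis using c0 by auto
  qed
  moreover have "u * z \<in> lprinc u" for z
  proof -
    obtain w where "z * c = c * w" using c by (force simp: invariant_el_def)
    moreover obtain w' where "p * w = w' * p" using p by (force simp: invariant_el_def)
    ultimately have "(u * z) * c = (w' * u) * c" using puc by (simp add: mult.assoc)
    then show ?thesis using c0 by auto
  qed
  ultimately show ?thesis using u0 unfolding invariant_el_def by auto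
qed

lemma invariant_el_mult_mem_lprinc_mult:
  assumes "invariant_el u"
  shows "u * r * v \<in> lprinc (u * v)"
proof -
  obtain r' where "u * r = r' * u" using assms by (force simp: invariant_el_def)
  then show ?thesis by (metis mem_lprinc mult.assoc)
qed

lemma invariant_el_lprinc_mult_left_mem_unit:
  fixes u v :: "'a::ring_1_no_zero_divisors"
  assumes u: "invariant_el u" and "u \<in> lprinc (u * v)"
  shows "unit_el v"
proof -
  obtain t where "u = t * u * v" using assms(2) by (auto simp: mult.assoc)
  moreover obtain t' where "t * u = u * t'" using u by (force simp: invariant_el_def)
  ultimately have "u = u * (t' * v)" by (simp add: mult.assoc)
  moreover have "u \<noteq> 0" using u by (simp add: invariant_el_def)
  ultimately have "t' * v = 1" by simp
  then show ?thesis by (auto simp: unit_el_iff_left_inverse)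
qed

section \<open>Two-sided ideals of a principal ideal domain\<close>

lemma PID_two_sided_ideal_invariant_generator:
  fixes I :: "'a::ring_1_no_zero_divisors set"
  assumes pid: "is_PID TYPE('a)" and I: "two_sided_ideal I" and nz: "I \<noteq> {0}"
  shows "\<exists>d. invariant_el d \<and> I = lprinc d"
proof -
  have li: "left_ideal I" and ri: "right_ideal I" using I two_sided_ideal_def by auto
  obtain c where c: "I = lprinc c" using pid li unfolding is_PID_def by blast
  obtain d where d: "I = rprinc d" using pid ri unfolding is_PID_def by blast
  have c0: "c \<noteq> 0" using nz c by auto
  have "c \<in> I" "d \<in> I" using c d by (metis mem_lprinc mult_1_left, metis mem_rprinc mult_1_right)
  obtain u where u: "c = d * u" using \<open>c \<in> I\<close> d by auto
  obtain v where v: "d = v * c" using \<open>d \<in> I\<close> c by auto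
  have "c * u \<in> I" using \<open>c \<in> I\<close> ri unfolding right_ideal_def by blast
  then obtain w where w: "c * u = w * c" using c by auto
  have "(v * w) * c = c" using u v w by (simp add: mult.assoc)
  then have "v * w = 1" using c0 by simp
  then have "c = w * d" using v mult_eq_1_commute by (metis mult.assoc mult_1_left)
  then have "I = lprinc d"
    using c \<open>d \<in> I\<close> li lprinc_subset_iff by (metis mem_lprinc subset_antisym)
  then show ?thesis using d c0 \<open>c = w * d\<close> unfolding invariant_el_def by auto
qed

lemma PID_Inv_atom_maximal:
  fixes p :: "'a::ring_1_no_zero_divisors"
  assumes pid: "is_PID TYPE('a)" and atom: "Inv_atom p"
    and J: "two_sided_ideal J" and "p \<in> J" and "J \<noteq> UNIV"
  shows "J = lprinc p"
proof -
  have p: "invariant_el p" using atom by (simp add: Inv_atom_def)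
  then have "J \<noteq> {0}" using \<open>p \<in> J\<close> by (auto simp: invariant_el_def)
  then obtain c where c: "invariant_el c" and Jc: "J = lprinc c"
    using PID_two_sided_ideal_invariant_generator[OF pid J] by blast
  obtain u where puc: "p = u * c" using \<open>p \<in> J\<close> Jc by auto
  have "invariant_el u" using invariant_el_left_quotient[OF p c puc] .
  then have "unit_el u \<or> unit_el c" using atom c puc by (simp add: Inv_atom_def)
  moreover have "\<not> unit_el c" using \<open>J \<noteq> UNIV\<close> Jc lprinc_eq_UNIV_iff by blast
  ultimately obtain v where "v * u = 1" by (auto simp: unit_el_iff_left_inverse)
  then have "c = v * p" using puc by (simp add: mult.assoc[symmetric])
  then show ?thesis using Jc \<open>p \<in> J\<close> lprinc_subset_iff by (metis mem_lprinc subset_antisym)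
qed

section \<open>Structural primeness of principal left ideals\<close>

lemma structurally_prime_iff:
  fixes P :: "'a::ring_1 set"
  shows "structurally_prime P \<longleftrightarrow>
    left_ideal P \<and> P \<noteq> UNIV \<and> (\<forall>x y. (\<forall>r. x * r * y \<in> P) \<longrightarrow> x \<in> P \<or> y \<in> P)"
proof -
  have "(\<forall>A B. left_ideal A \<longrightarrow> left_ideal B \<longrightarrow> ideal_prod A B \<subseteq> P \<longrightarrow> A \<subseteq> P \<or> B \<subseteq> P)
      \<longleftrightarrow> (\<forall>x y. (\<forall>r. x * r * y \<in> P) \<longrightarrow> x \<in> P \<or> y \<in> P)" if P: "left_ideal P"
  proof (intro iffI allI impI)
    fix x y
    assume prime: "\<forall>A B. left_ideal A \<longrightarrow> left_ideal B \<longrightarrow> ideal_prod A B \<subseteq> P \<longrightarrow> A \<subseteq> P \<or> B \<subseteq> P"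
      and xy: "\<forall>r. x * r * y \<in> P"
    have "ideal_prod (lprinc x) (lprinc y) \<subseteq> P"
    proof
      fix z assume "z \<in> ideal_prod (lprinc x) (lprinc y)"
      then show "z \<in> P"
      proof (induction rule: ideal_prod.induct)
        case zero
        then show ?case using P by (simp add: left_ideal_def)
      next
        case (add a b z)
        then obtain s t where "a = s * x" "b = t * y" by auto
        then have "a * b = s * (x * t * y)" by (simp add: mult.assoc)
        then show ?case using add.IH xy P unfolding left_ideal_def by metis
      qed
    qed
    then have "lprinc x \<subseteq> P \<or> lprinc y \<subseteq> P" using prime left_ideal_lprinc by blast
    then show "x \<in> P \<or> y \<in> P" by (metis mem_lprinc mult_1_left subsetD)
  next
    fix A B
    assume elementwise: "\<forall>x y. (\<forall>r. x * r * y \<in> P) \<longrightarrow> x \<in> P \<or> y \<in> P"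
      and "left_ideal A" and B: "left_ideal B" and AB: "ideal_prod A B \<subseteq> P"
    show "A \<subseteq> P \<or> B \<subseteq> P"
    proof (rule ccontr)
      assume "\<not> (A \<subseteq> P \<or> B \<subseteq> P)"
      then obtain x y where "x \<in> A" "x \<notin> P" "y \<in> B" "y \<notin> P" by blast
      moreover have "x * r * y \<in> P" for r
      proof -
        have "r * y \<in> B" using B \<open>y \<in> B\<close> by (simp add: left_ideal_def)
        then have "x * (r * y) + 0 \<in> ideal_prod A B"
          using ideal_prod.add[OF \<open>x \<in> A\<close> _ ideal_prod.zero] by blast
        then show ?thesis using AB by (auto simp: mult.assoc)
      qed
      ultimately show False using elementwise by blast
    qed
  qed
  then show ?thesis unfolding structurally_prime_def by blast
qed

lemma structurally_prime_lprinc_iff: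
  fixes a :: "'a::ring_1_no_zero_divisors"
  assumes "\<not> unit_el a"
  shows "structurally_prime (lprinc a) \<longleftrightarrow>
    (\<forall>x y. (\<forall>r. x * r * y \<in> lprinc a) \<longrightarrow> x \<in> lprinc a \<or> y \<in> lprinc a)"
  using assms
  by (simp add: structurally_prime_iff left_ideal_lprinc lprinc_eq_UNIV_iff del: mem_lprinc)

lemma structurally_prime_bounded_left_factor:
  fixes a b e :: "'a::ring_1_no_zero_divisors"
  assumes prime: "structurally_prime (lprinc a)" and a: "a = b * e" "a \<noteq> 0"
    and "\<not> unit_el b" and "bounded_el b"
  shows "bounded_el a"
proof -
  have "e \<notin> lprinc a" using lprinc_mult_right_mem_unit assms by auto
  have "bound_ideal b \<subseteq> lprinc a"
  proof
    fix z assume z: "z \<in> bound_ideal b"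
    have "z * r * e \<in> lprinc a" for r
    proof -
      obtain t where "z * r = t * b" using z by (auto simp: bound_ideal_def)
      then show ?thesis using a by (metis mem_lprinc mult.assoc)
    qed
    then show "z \<in> lprinc a" using prime \<open>e \<notin> lprinc a\<close>
      unfolding structurally_prime_iff by blast
  qed
  then have "bound_ideal b \<subseteq> bound_ideal a"
    using two_sided_ideal_bound_ideal right_ideal_subset_bound_ideal two_sided_ideal_def by blast
  then show ?thesis using \<open>bounded_el b\<close> by (auto simp: bounded_el_iff_bound_ideal)
qed

lemma PID_structurally_prime_bound_ideal_Inv_atom:
  fixes a :: "'a::ring_1_no_zero_divisors"
  assumes pid: "is_PID TYPE('a)" and prime: "structurally_prime (lprinc a)" and "bounded_el a"
  shows "\<exists>c. Inv_atom c \<and> bound_ideal a = lprinc c"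
proof -
  have "bound_ideal a \<noteq> {0}" using \<open>bounded_el a\<close> by (auto simp: bounded_el_iff_bound_ideal)
  then obtain c where c: "invariant_el c" and bc: "bound_ideal a = lprinc c"
    using PID_two_sided_ideal_invariant_generator[OF pid two_sided_ideal_bound_ideal] by blast
  have "\<not> unit_el c"
    using prime bc bound_ideal_subset lprinc_eq_UNIV_iff
    by (metis structurally_prime_def top.extremum_unique)
  moreover have "unit_el u \<or> unit_el v"
    if u: "invariant_el u" and v: "invariant_el v" and cuv: "c = u * v" for u v
  proof -
    have "u * r * v \<in> lprinc a" for r
      using invariant_el_mult_mem_lprinc_mult[OF u] bc cuv bound_ideal_subset by blast
    then have "u \<in> lprinc a \<or> v \<in> lprinc a"
      using prime by (simp add: structurally_prime_iff del: mem_lprinc)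
    then have "u \<in> lprinc c \<or> v \<in> lprinc c" using invariant_el_mem_bound_ideal u v bc by blast
    then show ?thesis
      using cuv u v invariant_el_lprinc_mult_left_mem_unit lprinc_mult_right_mem_unit
      by (metis invariant_el_def)
  qed
  ultimately show ?thesis using c bc unfolding Inv_atom_def by blast
qed

lemma PID_left_factor_bound_ideal_mem:
  fixes a x y :: "'a::ring_1_no_zero_divisors"
  assumes pid: "is_PID TYPE('a)" and "a \<noteq> 0" and y: "y \<notin> lprinc a"
    and xy: "\<And>r. x * r * y \<in> lprinc a"
  shows "\<exists>a' d. a = a' * d \<and> \<not> unit_el a' \<and> x \<in> bound_ideal a'"
proof -
  let ?S = "{s * a + t * y | s t. True}"
  have "left_ideal ?S" unfolding left_ideal_def
  proof (intro conjI ballI allI)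
    have "0 = 0 * a + 0 * y" by simp
    then show "0 \<in> ?S" by blast
  next
    fix u v assume "u \<in> ?S" "v \<in> ?S"
    then obtain s1 t1 s2 t2 where "u = s1 * a + t1 * y" "v = s2 * a + t2 * y" by blast
    then have "u + v = (s1 + s2) * a + (t1 + t2) * y" by (simp add: algebra_simps)
    then show "u + v \<in> ?S" by blast
  next
    fix r u assume "u \<in> ?S"
    then obtain s t where "u = s * a + t * y" by blast
    then have "r * u = (r * s) * a + (r * t) * y" by (simp add: algebra_simps)
    then show "r * u \<in> ?S" by blast
  qed
  then obtain d where d: "?S = lprinc d" using pid unfolding is_PID_def by blast
  have "a \<in> ?S" by (rule CollectI, rule exI[of _ 1], rule exI[of _ 0]) simp
  then obtain a' where a': "a = a' * d" using d mem_lprinc by blast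
  have "y \<in> ?S" by (rule CollectI, rule exI[of _ 0], rule exI[of _ 1]) simp
  then obtain q where q: "y = q * d" using d mem_lprinc by blast
  have "d \<in> ?S" using d mem_lprinc by (metis mult_1_left)
  then obtain s t where st: "d = s * a + t * y" by blast
  have "d \<noteq> 0" using a' \<open>a \<noteq> 0\<close> by auto
  have "\<not> unit_el a'"
  proof
    assume "unit_el a'"
    then obtain v where "v * a' = 1" by (auto simp: unit_el_iff_left_inverse)
    then have "y = (q * v) * a" using a' q by (metis mult.assoc mult_1_left)
    then show False using y by auto
  qed
  moreover have "x * r \<in> lprinc a'" for r
  proof -
    obtain k where k: "x * (r * t) * y = k * a" using xy[of "r * t"] by auto
    have "x * r * d = (x * r * s + k) * a" using st k by (simp add: algebra_simps)
    also have "\<dots> = ((x * r * s + k) * a') * d" using a' by (simp add: mult.assoc)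
    finally have "x * r = (x * r * s + k) * a'" using \<open>d \<noteq> 0\<close> by simp
    then show ?thesis using mem_lprinc by blast
  qed
  ultimately show ?thesis using a' unfolding bound_ideal_def by blast
qed

lemma PID_structurally_prime_lprinc_if_bound_ideals:
  fixes a :: "'a::ring_1_no_zero_divisors"
  assumes pid: "is_PID TYPE('a)" and "a \<noteq> 0" and "\<not> unit_el a"
    and bounds: "\<And>a' d. a = a' * d \<Longrightarrow> \<not> unit_el a' \<Longrightarrow> bound_ideal a' \<subseteq> lprinc a"
  shows "structurally_prime (lprinc a)"
  unfolding structurally_prime_lprinc_iff[OF \<open>\<not> unit_el a\<close>]
proof (intro allI impI)
  fix x y assume "\<forall>r. x * r * y \<in> lprinc a"
  then show "x \<in> lprinc a \<or> y \<in> lprinc a"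
    using PID_left_factor_bound_ideal_mem[OF pid \<open>a \<noteq> 0\<close>] bounds by blast
qed

lemma PID_Inv_atom_factor_bound_ideal:
  fixes p :: "'a::ring_1_no_zero_divisors"
  assumes pid: "is_PID TYPE('a)" and atom: "Inv_atom p" and "factor_of a p" and "\<not> unit_el a"
  shows "bound_ideal a = lprinc p"
proof -
  have "p \<in> bound_ideal a"
    using atom \<open>factor_of a p\<close> invariant_el_factor_mem_lprinc invariant_el_mem_bound_ideal
    by (auto simp: Inv_atom_def simp del: mem_lprinc)
  moreover have "bound_ideal a \<noteq> UNIV"
    using bound_ideal_subset lprinc_eq_UNIV_iff \<open>\<not> unit_el a\<close> by blast
  ultimately show ?thesis using PID_Inv_atom_maximal[OF pid atom two_sided_ideal_bound_ideal] by blast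
qed

lemma PID_structurally_prime_Inv_atom_factor:
  fixes a :: "'a::ring_1_no_zero_divisors"
  assumes pid: "is_PID TYPE('a)" and prime: "structurally_prime (lprinc a)"
    and "a \<noteq> 0" and "\<not> unit_el a" and "\<not> left_totally_unbounded a"
  shows "\<exists>p. Inv_atom p \<and> factor_of a p"
proof -
  obtain b e where "a = b * e" "\<not> unit_el b" "bounded_el b"
    using assms(3-5) by (auto simp: left_totally_unbounded_def left_factor_of_def)
  then have "bounded_el a" using structurally_prime_bounded_left_factor prime \<open>a \<noteq> 0\<close> by blast
  then obtain c where "Inv_atom c" and bc: "bound_ideal a = lprinc c"
    using PID_structurally_prime_bound_ideal_Inv_atom pid prime by blast
  moreover have "factor_of a c"
    using bound_ideal_subset bc unfolding factor_of_def
    by (metis lprinc_subset_iff mem_lprinc mult_1_right)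
  ultimately show ?thesis by blast
qed

lemma PID_left_factor_bound_ideal_subset:
  fixes a :: "'a::ring_1_no_zero_divisors"
  assumes pid: "is_PID TYPE('a)"
    and a: "left_totally_unbounded a \<or> (\<exists>p. Inv_atom p \<and> factor_of a p)"
    and "a = a' * d" and "\<not> unit_el a'"
  shows "bound_ideal a' \<subseteq> lprinc a"
  using a
proof
  assume "left_totally_unbounded a"
  then have "\<not> bounded_el a'"
    using assms(3,4) by (auto simp: left_totally_unbounded_def left_factor_of_def)
  then show ?thesis by (auto simp: bounded_el_iff_bound_ideal)
next
  assume "\<exists>p. Inv_atom p \<and> factor_of a p"
  then obtain p where p: "Inv_atom p" "factor_of a p" by blast
  then have "factor_of a' p" using \<open>a = a' * d\<close> unfolding factor_of_def by (metis mult.assoc)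
  then have "bound_ideal a' = lprinc p"
    using PID_Inv_atom_factor_bound_ideal pid p(1) \<open>\<not> unit_el a'\<close> by blast
  moreover have "p \<in> lprinc a" using p invariant_el_factor_mem_lprinc Inv_atom_def by blast
  ultimately show ?thesis using lprinc_subset_iff by blast
qed

theorem proposition3p13:
  fixes a :: "'a::ring_1_no_zero_divisors"
  assumes "is_PID TYPE('a)"
    and "a \<noteq> 0" and "\<not> unit_el a"
  shows "structurally_prime (lprinc a) \<longleftrightarrow>
           left_totally_unbounded a \<or> (\<exists>p. Inv_atom p \<and> factor_of a p)"
proof
  assume "structurally_prime (lprinc a)"
  then show "left_totally_unbounded a \<or> (\<exists>p. Inv_atom p \<and> factor_of a p)"
    using PID_structurally_prime_Inv_atom_factor assms by blast
next
  assume "left_totally_unbounded a \<or> (\<exists>p. Inv_atom p \<and> factor_of a p)"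
  then have "bound_ideal a' \<subseteq> lprinc a" if "a = a' * d" "\<not> unit_el a'" for a' d
    using PID_left_factor_bound_ideal_subset assms(1) that by blast
  then show "structurally_prime (lprinc a)"
    using PID_structurally_prime_lprinc_if_bound_ideals assms by blast
qed

end
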